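(* Let $A$ be an R$^*$-algebra and $v\in A$ a partial isometry. If $vv^*\le v^*v$, then $vv^*=v^*v$.
   Context: An R$^*$-algebra is a (not necessarily closed, not necessarily unital) $^*$-subalgebra $A$ of $B(H)$, $H$ a complex Hilbert space, such that every self-adjoint element of $A$ has finite spectrum. For projections, $p\le q$ means $pq=p$. *)

theory Defs
  imports "HOL-Analysis.Analysis"
begin

text \<open>The distribution has no complex Hilbert spaces, so we introduce them.
  Convention: the inner product is conjugate-linear in the first argument.\<close>

class complex_vector = real_vector +
  fixes scaleC :: "complex \<Rightarrow> 'a \<Rightarrow> 'a"
  assumes scaleC_add_right: "scaleC a (x + y) = scaleC a x + scaleC a y"
    and scaleC_add_left: "scaleC (a + b) x = scaleC a x + scaleC b x"
    and scaleC_scaleC: "scaleC a (scaleC b x) = scaleC (a * b) x"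
    and scaleC_one: "scaleC 1 x = x"
    and scaleR_scaleC: "scaleR r x = scaleC (complex_of_real r) x"

class complex_inner = complex_vector + real_normed_vector +
  fixes cinner :: "'a \<Rightarrow> 'a \<Rightarrow> complex"
  assumes cinner_conj: "cinner x y = cnj (cinner y x)"
    and cinner_add_right: "cinner x (y + z) = cinner x y + cinner x z"
    and cinner_scaleC_right: "cinner x (scaleC c y) = c * cinner x y"
    and cinner_pos: "Im (cinner x x) = 0 \<and> 0 \<le> Re (cinner x x)"
    and cinner_eq_zero_iff: "cinner x x = 0 \<longleftrightarrow> x = 0"
    and norm_eq_sqrt_cinner: "norm x = sqrt (Re (cinner x x))"

class chilbert_space = complex_inner + complete_space

definition bounded_clinear :: "('a::complex_inner \<Rightarrow> 'b::complex_inner) \<Rightarrow> bool" where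
  "bounded_clinear T \<longleftrightarrow> bounded_linear T \<and> (\<forall>c x. T (scaleC c x) = scaleC c (T x))"

text \<open>The Hilbert space adjoint (exists and is unique for bounded operators on a Hilbert space).\<close>
definition cadjoint :: "('a::chilbert_space \<Rightarrow> 'a) \<Rightarrow> ('a \<Rightarrow> 'a)" where
  "cadjoint T = (SOME S. \<forall>x y. cinner (T x) y = cinner x (S y))"

definition cspectrum :: "('a::chilbert_space \<Rightarrow> 'a) \<Rightarrow> complex set" where
  "cspectrum T = {z. \<not> (\<exists>S. bounded_clinear S \<and>
       S \<circ> (\<lambda>x. T x - scaleC z x) = id \<and> (\<lambda>x. T x - scaleC z x) \<circ> S = id)}"

text \<open>An R*-algebra: a (not necessarily closed, not necessarily unital) *-subalgebra of B(H)
  in which every self-adjoint element has finite spectrum.\<close>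
definition rstar_algebra :: "('a::chilbert_space \<Rightarrow> 'a) set \<Rightarrow> bool" where
  "rstar_algebra A \<longleftrightarrow>
     (\<forall>T\<in>A. bounded_clinear T) \<and>
     (\<lambda>x. 0) \<in> A \<and>
     (\<forall>S\<in>A. \<forall>T\<in>A. (\<lambda>x. S x + T x) \<in> A) \<and>
     (\<forall>c. \<forall>T\<in>A. (\<lambda>x. scaleC c (T x)) \<in> A) \<and>
     (\<forall>S\<in>A. \<forall>T\<in>A. S \<circ> T \<in> A) \<and>
     (\<forall>T\<in>A. cadjoint T \<in> A) \<and>
     (\<forall>T\<in>A. cadjoint T = T \<longrightarrow> finite (cspectrum T))"

definition is_projection :: "('a::chilbert_space \<Rightarrow> 'a) \<Rightarrow> bool" where
  "is_projection p \<longleftrightarrow> p \<circ> p = p \<and> cadjoint p = p"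

definition proj_le :: "('a::chilbert_space \<Rightarrow> 'a) \<Rightarrow> ('a \<Rightarrow> 'a) \<Rightarrow> bool" where
  "proj_le p q \<longleftrightarrow> p \<circ> q = p"

definition partial_isometry :: "('a::chilbert_space \<Rightarrow> 'a) \<Rightarrow> bool" where
  "partial_isometry v \<longleftrightarrow> is_projection (cadjoint v \<circ> v)"

end

theory Submission
  imports Defs
begin

(* If v v* < v* v, a unit vector \<xi> in the range of v* v - v v* satisfies v* \<xi> = 0 and v is
   isometric on its orbit, so e_k = v^k \<xi> is orthonormal and v shifts it. The self-adjoint
   element h = v + v* of A then acts on (e_k) as the free Jacobi matrix. For |r| < 2 a solution
   of (h - r) y = e_0 would have coefficients a_k = Re <e_k, y> obeying
   a_(k+2) = r a_(k+1) - a_k with a_1 - r a_0 = 1; the conserved quantity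
   a_k^2 + a_(k+1)^2 - r a_k a_(k+1) is then a positive definite form, contradicting Bessel's
   inequality. Hence the spectrum of h contains ]-2, 2[ and is infinite.
   Since cadjoint is defined by choice, its adjoint property rests on the Riesz representation
   theorem, which follows from best approximation in closed convex sets. *)

section \<open>Complex inner product spaces\<close>

declare cinner_eq_zero_iff [simp]

lemma scaleC_zero_right [simp]: "scaleC c (0::'a::complex_vector) = 0"
  using scaleC_add_right[of c "0::'a" 0] by simp

lemma cinner_add_left: "cinner (x + y) (z::'a::complex_inner) = cinner x z + cinner y z"
  by (simp only: cinner_conj[of "x + y" z] cinner_conj[of x z] cinner_conj[of y z]
      cinner_add_right complex_cnj_add)

lemma cinner_scaleC_left: "cinner (scaleC c x) (y::'a::complex_inner) = cnj c * cinner x y"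
  by (simp only: cinner_conj[of "scaleC c x" y] cinner_conj[of x y] cinner_scaleC_right
      complex_cnj_mult)

lemma cinner_zero_right [simp]: "cinner (x::'a::complex_inner) 0 = 0"
  using cinner_add_right[of x 0 0] by simp

lemma cinner_zero_left [simp]: "cinner 0 (x::'a::complex_inner) = 0"
  by (simp only: cinner_conj[of 0 x] cinner_zero_right complex_cnj_zero)

lemma cinner_diff_right: "cinner (x::'a::complex_inner) (y - z) = cinner x y - cinner x z"
  using cinner_add_right[of x "y - z" z] by simp

lemma cinner_diff_left: "cinner (x - y) (z::'a::complex_inner) = cinner x z - cinner y z"
  by (simp only: cinner_conj[of "x - y" z] cinner_conj[of x z] cinner_conj[of y z]
      cinner_diff_right complex_cnj_diff)

lemma cinner_scaleR_right: "cinner (x::'a::complex_inner) (scaleR r y) = of_real r * cinner x y"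
  by (simp add: scaleR_scaleC cinner_scaleC_right)

lemma cinner_sum_left: "cinner (sum f S) (x::'a::complex_inner) = (\<Sum>k\<in>S. cinner (f k) x)"
  by (induction S rule: infinite_finite_induct) (simp_all add: cinner_add_left)

lemma cinner_sum_right: "cinner (x::'a::complex_inner) (sum f S) = (\<Sum>k\<in>S. cinner x (f k))"
  by (induction S rule: infinite_finite_induct) (simp_all add: cinner_add_right)

lemma Re_cinner_commute: "Re (cinner y x) = Re (cinner x (y::'a::complex_inner))"
  by (subst cinner_conj) simp

lemma cinner_self: "cinner (x::'a::complex_inner) x = complex_of_real ((norm x)\<^sup>2)"
  using cinner_pos[of x] norm_eq_sqrt_cinner[of x] by (simp add: complex_eq_iff)

lemma power2_norm_eq_cinner: "(norm (x::'a::complex_inner))\<^sup>2 = Re (cinner x x)"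
  by (simp add: cinner_self)

lemma cinner_ext:
  assumes "\<And>y. cinner y a = cinner y (b::'a::complex_inner)"
  shows "a = b"
  using assms[of "a - b"] cinner_eq_zero_iff[of "a - b"] by (simp add: cinner_diff_right)

lemma power2_norm_add:
  "(norm (x + y))\<^sup>2 = (norm x)\<^sup>2 + (norm y)\<^sup>2 + 2 * Re (cinner x (y::'a::complex_inner))"
  by (simp add: power2_norm_eq_cinner cinner_add_left cinner_add_right Re_cinner_commute[of y x])

lemma power2_norm_diff:
  "(norm (x - y))\<^sup>2 = (norm x)\<^sup>2 + (norm y)\<^sup>2 - 2 * Re (cinner x (y::'a::complex_inner))"
  by (simp add: power2_norm_eq_cinner cinner_diff_left cinner_diff_right Re_cinner_commute[of y x])

lemma parallelogram_law:
  "(norm (x + y))\<^sup>2 + (norm (x - y))\<^sup>2 = 2 * (norm x)\<^sup>2 + 2 * (norm (y::'a::complex_inner))\<^sup>2"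
  by (simp add: power2_norm_add power2_norm_diff)

lemma norm_scaleC: "norm (scaleC c (x::'a::complex_inner)) = cmod c * norm x"
proof -
  have "cinner (scaleC c x) (scaleC c x) = (cnj c * c) * cinner x x"
    by (simp add: cinner_scaleC_left cinner_scaleC_right)
  also have "cnj c * c = complex_of_real ((cmod c)\<^sup>2)"
    by (simp only: complex_norm_square mult.commute)
  finally have "complex_of_real ((norm (scaleC c x))\<^sup>2) = complex_of_real ((cmod c * norm x)\<^sup>2)"
    by (simp only: cinner_self power_mult_distrib of_real_mult)
  then have "(norm (scaleC c x))\<^sup>2 = (cmod c * norm x)\<^sup>2"
    by (simp only: of_real_eq_iff)
  then show ?thesis
    by (simp add: power2_eq_iff_nonneg)
qed

lemma power2_norm_diff_projection:
  fixes x y :: "'a::complex_inner"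
  assumes "x \<noteq> 0"
  shows "(norm (y - scaleC (cinner x y / of_real ((norm x)\<^sup>2)) x))\<^sup>2
           = (norm y)\<^sup>2 - (cmod (cinner x y))\<^sup>2 / (norm x)\<^sup>2"
proof -
  define g where "g = cinner x y"
  define n where "n = (norm x)\<^sup>2"
  have n: "n > 0"
    using assms by (simp add: n_def)
  have "cinner y (scaleC (g / of_real n) x) = complex_of_real ((cmod g)\<^sup>2 / n)"
    using cinner_conj[of y x] complex_norm_square[of g]
    by (simp add: cinner_scaleC_right g_def)
  moreover have "(cmod (g / of_real n) * norm x)\<^sup>2 = (cmod g)\<^sup>2 / n"
    using n by (simp add: norm_divide power_divide power_mult_distrib norm_power norm_mult n_def
        power2_eq_square)
  ultimately show ?thesis
    by (simp add: power2_norm_diff norm_scaleC g_def n_def)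
qed

lemma cinner_Cauchy_Schwarz: "cmod (cinner x y) \<le> norm x * norm (y::'a::complex_inner)"
proof (cases "x = 0")
  case True
  then show ?thesis by simp
next
  case False
  then have "(cmod (cinner x y))\<^sup>2 / (norm x)\<^sup>2 \<le> (norm y)\<^sup>2"
    using power2_norm_diff_projection[of x y] by (metis diff_ge_0_iff_ge zero_le_power2)
  then have "(cmod (cinner x y))\<^sup>2 \<le> (norm x * norm y)\<^sup>2"
    using False by (simp add: field_simps power_mult_distrib)
  then show ?thesis
    by (simp add: power2_le_iff_abs_le)
qed

section \<open>Best approximation and the Riesz representation theorem\<close>

lemma Cauchy_if_power2_norm_diff_le:
  fixes X :: "nat \<Rightarrow> 'a::real_normed_vector"
  assumes le: "\<And>m n. (norm (X m - X n))\<^sup>2 \<le> e m + e n" and e: "e \<longlonglongrightarrow> 0"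
  shows "Cauchy X"
proof (rule metric_CauchyI)
  fix r :: real
  assume "r > 0"
  then obtain M where M: "\<And>n. n \<ge> M \<Longrightarrow> \<bar>e n\<bar> < r\<^sup>2 / 2"
    using e unfolding LIMSEQ_iff by (metis half_gt_zero real_norm_def diff_zero zero_less_power)
  have "dist (X m) (X n) < r" if "m \<ge> M" "n \<ge> M" for m n
  proof -
    have "(norm (X m - X n))\<^sup>2 < r\<^sup>2"
      using le[of m n] M[OF \<open>m \<ge> M\<close>] M[OF \<open>n \<ge> M\<close>] by linarith
    then show ?thesis
      using \<open>r > 0\<close> by (simp add: dist_norm power_less_imp_less_base)
  qed
  then show "\<exists>M. \<forall>m\<ge>M. \<forall>n\<ge>M. dist (X m) (X n) < r"
    by blast
qed

lemma almost_closest_points_close: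
  fixes x a b :: "'a::complex_inner"
  assumes "convex K" "a \<in> K" "b \<in> K" and d: "\<And>k. k \<in> K \<Longrightarrow> d \<le> (norm (x - k))\<^sup>2"
    and "(norm (x - a))\<^sup>2 \<le> d + \<alpha>" "(norm (x - b))\<^sup>2 \<le> d + \<beta>"
  shows "(norm (a - b))\<^sup>2 \<le> 2 * \<alpha> + 2 * \<beta>"
proof -
  have "midpoint a b \<in> K"
    using convexD[OF assms(1-3), of "1/2" "1/2"] by (simp add: midpoint_def scaleR_add_right)
  then have "4 * d \<le> (norm (2 *\<^sub>R (x - midpoint a b)))\<^sup>2"
    using d by (simp add: power_mult_distrib)
  also have "2 *\<^sub>R (x - midpoint a b) = (x - a) + (x - b)"
    by (simp add: midpoint_def algebra_simps scaleR_2)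
  finally have "4 * d \<le> (norm ((x - a) + (x - b)))\<^sup>2" .
  moreover have "a - b = (x - b) - (x - a)"
    by simp
  ultimately show ?thesis
    using parallelogram_law[of "x - b" "x - a"] assms(5,6)
    by (simp add: add.commute norm_minus_commute)
qed

lemma closest_point_exists:
  fixes x :: "'a::chilbert_space"
  assumes "closed K" "convex K" "K \<noteq> {}"
  obtains k where "k \<in> K" "\<And>k'. k' \<in> K \<Longrightarrow> norm (x - k) \<le> norm (x - k')"
proof -
  define d where "d = Inf ((\<lambda>k. (norm (x - k))\<^sup>2) ` K)"
  have d_le: "d \<le> (norm (x - k))\<^sup>2" if "k \<in> K" for k
    unfolding d_def using that by (intro cInf_lower bdd_belowI[of _ 0]) auto
  define \<epsilon> where "\<epsilon> n = inverse (real (Suc n))" for n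
  have "\<exists>k\<in>K. (norm (x - k))\<^sup>2 < d + \<epsilon> n" for n
    using cInf_lessD[of "(\<lambda>k. (norm (x - k))\<^sup>2) ` K" "d + \<epsilon> n"] \<open>K \<noteq> {}\<close>
    by (auto simp: d_def \<epsilon>_def)
  then obtain ks where ks: "\<And>n. ks n \<in> K" "\<And>n. (norm (x - ks n))\<^sup>2 < d + \<epsilon> n"
    by metis
  have "(norm (ks m - ks n))\<^sup>2 \<le> 2 * \<epsilon> m + 2 * \<epsilon> n" for m n
    using assms(2) ks d_le by (intro almost_closest_points_close) (auto intro: less_imp_le)
  moreover have "(\<lambda>n. 2 * \<epsilon> n) \<longlonglongrightarrow> 0"
    unfolding \<epsilon>_def using tendsto_mult_right_zero[OF LIMSEQ_inverse_real_of_nat] by simp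
  ultimately have "Cauchy ks"
    by (rule Cauchy_if_power2_norm_diff_le)
  then obtain k where k: "ks \<longlonglongrightarrow> k"
    using Cauchy_convergent_iff convergent_def by blast
  have "(norm (x - k))\<^sup>2 \<le> d"
  proof (rule LIMSEQ_le)
    show "(\<lambda>n. (norm (x - ks n))\<^sup>2) \<longlonglongrightarrow> (norm (x - k))\<^sup>2"
      by (intro tendsto_intros k)
    show "(\<lambda>n. d + \<epsilon> n) \<longlonglongrightarrow> d"
      unfolding \<epsilon>_def using tendsto_add[OF tendsto_const LIMSEQ_inverse_real_of_nat] by simp
    show "\<exists>N. \<forall>n\<ge>N. (norm (x - ks n))\<^sup>2 \<le> d + \<epsilon> n"
      using ks(2) less_imp_le by blast
  qed
  then show ?thesis
    using that closed_sequentially[OF \<open>closed K\<close> ks(1) k] d_le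
    by (meson norm_ge_zero order_trans power2_le_imp_le)
qed

definition csubspace :: "'a::complex_vector set \<Rightarrow> bool" where
  "csubspace K \<longleftrightarrow> 0 \<in> K \<and> (\<forall>x\<in>K. \<forall>y\<in>K. x + y \<in> K) \<and> (\<forall>c. \<forall>x\<in>K. scaleC c x \<in> K)"

lemma csubspace_convex: "csubspace K \<Longrightarrow> convex K"
  unfolding csubspace_def convex_def scaleR_scaleC by blast

lemma closest_point_orthogonal:
  fixes w :: "'a::complex_inner"
  assumes "csubspace K" "k \<in> K" and min: "\<And>k'. k' \<in> K \<Longrightarrow> norm w \<le> norm (w - k')"
  shows "cinner w k = 0"
proof (cases "k = 0")
  case True
  then show ?thesis by simp
next
  case False
  have "norm w \<le> norm (w - scaleC (cinner k w / of_real ((norm k)\<^sup>2)) k)"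
    using assms(1,2) by (intro min) (simp add: csubspace_def)
  then have "(norm w)\<^sup>2 \<le> (norm w)\<^sup>2 - (cmod (cinner k w))\<^sup>2 / (norm k)\<^sup>2"
    using power2_norm_diff_projection[OF False, of w] by (metis norm_ge_zero power_mono)
  then have "cinner k w = 0"
    using False by (simp add: divide_le_0_iff)
  then show ?thesis
    by (metis cinner_conj complex_cnj_zero)
qed

lemma orthogonal_vector_exists:
  fixes x :: "'a::chilbert_space"
  assumes "closed K" "csubspace K" "x \<notin> K"
  obtains w where "w \<noteq> 0" "\<And>k. k \<in> K \<Longrightarrow> cinner w k = 0"
proof -
  have "K \<noteq> {}"
    using assms(2) by (auto simp: csubspace_def)
  then obtain k0 where k0: "k0 \<in> K" "\<And>k. k \<in> K \<Longrightarrow> norm (x - k0) \<le> norm (x - k)"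
    using closest_point_exists[OF assms(1) csubspace_convex[OF assms(2)]] by metis
  have "norm (x - k0) \<le> norm ((x - k0) - k)" if "k \<in> K" for k
    using k0 that assms(2) by (metis csubspace_def diff_diff_eq)
  then have "cinner (x - k0) k = 0" if "k \<in> K" for k
    using closest_point_orthogonal[OF assms(2) that] by blast
  moreover have "x - k0 \<noteq> 0"
    using k0(1) assms(3) by auto
  ultimately show ?thesis
    using that by blast
qed

theorem riesz_representation:
  fixes f :: "'a::chilbert_space \<Rightarrow> complex"
  assumes "bounded_linear f" and scaleC: "\<And>c x. f (scaleC c x) = c * f x"
  obtains z where "\<And>x. f x = cinner z x"
proof (cases "\<forall>x. f x = 0")
  case True
  then show ?thesis
    using that[of 0] by simp
next
  case False
  then obtain x0 where "f x0 \<noteq> 0"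
    by blast
  interpret f: bounded_linear f by fact
  define K where "K = {x. f x = 0}"
  have "closed K"
    unfolding K_def by (intro closed_Collect_eq f.continuous_on continuous_on_id continuous_on_const)
  moreover have "csubspace K"
    by (simp add: K_def csubspace_def f.add f.zero scaleC)
  moreover have "x0 \<notin> K"
    using \<open>f x0 \<noteq> 0\<close> by (simp add: K_def)
  ultimately obtain w where w: "w \<noteq> 0" "\<And>k. k \<in> K \<Longrightarrow> cinner w k = 0"
    using orthogonal_vector_exists by metis
  have "f w \<noteq> 0"
    using w cinner_eq_zero_iff unfolding K_def by blast
  have "cinner w w \<noteq> 0"
    using w(1) by simp
  have "f x = cinner (scaleC (cnj (f w / cinner w w)) w) x" for x
  proof -
    have "cinner w (x - scaleC (f x / f w) w) = 0"
      using \<open>f w \<noteq> 0\<close> by (intro w(2)) (simp add: K_def f.diff scaleC)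
    then show ?thesis
      using \<open>f w \<noteq> 0\<close> \<open>cinner w w \<noteq> 0\<close>
      by (simp add: cinner_diff_right cinner_scaleC_left cinner_scaleC_right field_simps)
  qed
  then show ?thesis
    using that by blast
qed

section \<open>Adjoints\<close>

lemma bounded_clinear_diff: "bounded_clinear T \<Longrightarrow> T (a - b) = T a - T b"
  unfolding bounded_clinear_def by (simp add: linear_diff bounded_linear.linear)

lemma bounded_clinear_scaleC: "bounded_clinear T \<Longrightarrow> T (scaleC c a) = scaleC c (T a)"
  unfolding bounded_clinear_def by simp

lemma bounded_linear_cinner_right: "bounded_linear (cinner (y::'a::complex_inner))"
proof (rule bounded_linear_intro)
  show "cinner y (a + b) = cinner y a + cinner y b" for a b
    by (rule cinner_add_right)
  show "cinner y (scaleR r a) = scaleR r (cinner y a)" for r a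
    by (simp add: cinner_scaleR_right scaleR_conv_of_real)
  show "norm (cinner y a) \<le> norm a * norm y" for a
    using cinner_Cauchy_Schwarz[of y a] by (simp add: mult.commute)
qed

lemma cinner_cadjoint:
  fixes T :: "'a::chilbert_space \<Rightarrow> 'a"
  assumes "bounded_clinear T"
  shows "cinner (T x) y = cinner x (cadjoint T y)"
proof -
  have "\<exists>z. \<forall>x. cinner y (T x) = cinner z x" for y
  proof -
    have "bounded_linear (\<lambda>x. cinner y (T x))"
      using assms bounded_linear_compose[OF bounded_linear_cinner_right]
      by (auto simp: bounded_clinear_def)
    moreover have "cinner y (T (scaleC c x)) = c * cinner y (T x)" for c x
      using assms by (simp add: bounded_clinear_def cinner_scaleC_right)
    ultimately show ?thesis
      by (rule riesz_representation) blast
  qed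
  then obtain S where S: "\<And>x y. cinner y (T x) = cinner (S y) x"
    by metis
  have "\<forall>x y. cinner (T x) y = cinner x (S y)"
    by (simp only: cinner_conj[of "T _"] cinner_conj[of _ "S _"] S simp_thms)
  then have "\<exists>S. \<forall>x y. cinner (T x) y = cinner x (S y)"
    by blast
  from someI_ex[OF this] show ?thesis
    unfolding cadjoint_def by blast
qed

lemma cinner_cadjoint_left:
  fixes T :: "'a::chilbert_space \<Rightarrow> 'a"
  assumes "bounded_clinear T"
  shows "cinner (cadjoint T x) y = cinner x (T y)"
  by (simp only: cinner_conj[of "cadjoint T x"] cinner_conj[of x] cinner_cadjoint[OF assms])

lemma cadjoint_eqI:
  fixes T :: "'a::chilbert_space \<Rightarrow> 'a"
  assumes "\<And>x y. cinner (T x) y = cinner x (S y)"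
  shows "cadjoint T = S"
proof
  fix y
  have "\<exists>S. \<forall>x y. cinner (T x) y = cinner x (S y)"
    using assms by blast
  from someI_ex[OF this] have adj: "\<forall>x y. cinner (T x) y = cinner x (cadjoint T y)"
    unfolding cadjoint_def .
  show "cadjoint T y = S y"
    by (intro cinner_ext) (simp only: assms flip: adj[rule_format])
qed

lemma cadjoint_diff:
  fixes T :: "'a::chilbert_space \<Rightarrow> 'a"
  assumes "bounded_clinear T"
  shows "cadjoint T (a - b) = cadjoint T a - cadjoint T b"
  by (rule cinner_ext) (simp add: cinner_cadjoint[OF assms, symmetric] cinner_diff_right)

lemma cadjoint_scaleC:
  fixes T :: "'a::chilbert_space \<Rightarrow> 'a"
  assumes "bounded_clinear T"
  shows "cadjoint T (scaleC c a) = scaleC c (cadjoint T a)"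
  by (rule cinner_ext) (simp add: cinner_cadjoint[OF assms, symmetric] cinner_scaleC_right)

section \<open>Spectrum of the free Jacobi operator\<close>

definition orthonormal_seq :: "(nat \<Rightarrow> 'a::complex_inner) \<Rightarrow> bool" where
  "orthonormal_seq e \<longleftrightarrow> (\<forall>j k. cinner (e j) (e k) = (if j = k then 1 else 0))"

lemma Bessel_inequality:
  fixes e :: "nat \<Rightarrow> 'a::complex_inner"
  assumes "orthonormal_seq e"
  shows "(\<Sum>k<n. (cmod (cinner (e k) y))\<^sup>2) \<le> (norm y)\<^sup>2"
proof -
  define t where "t k = cinner (e k) y" for k
  define s where "s = (\<Sum>k<n. scaleC (t k) (e k))"
  have es: "cinner (e j) s = t j" if "j < n" for j
  proof -
    have "cinner (e j) s = (\<Sum>k<n. if k = j then t k else 0)"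
      using assms unfolding s_def orthonormal_seq_def cinner_sum_right
      by (intro sum.cong) (auto simp: cinner_scaleC_right)
    then show ?thesis
      using that by simp
  qed
  have s_left: "cinner s z = (\<Sum>k<n. cnj (t k) * cinner (e k) z)" for z
    by (simp add: s_def cinner_sum_left cinner_scaleC_left)
  have "cinner s (y - s) = 0"
    by (simp add: s_left cinner_diff_right es t_def)
  then have "Re (cinner (y - s) s) = 0"
    by (simp add: Re_cinner_commute[of "y - s" s])
  moreover have "Re (cinner s s) = (\<Sum>k<n. (cmod (t k))\<^sup>2)"
    by (simp add: s_left es cmod_power2 flip: power2_eq_square)
  ultimately have "(norm y)\<^sup>2 = (norm (y - s))\<^sup>2 + (\<Sum>k<n. (cmod (t k))\<^sup>2)"
    using power2_norm_add[of "y - s" s] by (simp add: power2_norm_eq_cinner[of s])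
  then show ?thesis
    by (simp add: t_def)
qed

lemma recurrence_not_square_summable:
  fixes a :: "nat \<Rightarrow> real"
  assumes rec: "\<And>k. a (Suc (Suc k)) = r * a (Suc k) - a k"
    and r: "\<bar>r\<bar> < 2" and nz: "a 0 \<noteq> 0 \<or> a 1 \<noteq> 0"
  shows "\<not> summable (\<lambda>k. (a k)\<^sup>2)"
proof
  assume "summable (\<lambda>k. (a k)\<^sup>2)"
  define Q where "Q k = (a k)\<^sup>2 + (a (Suc k))\<^sup>2 - r * a k * a (Suc k)" for k
  have "Q (Suc k) = Q k" for k
    unfolding Q_def rec by (simp add: algebra_simps power2_eq_square)
  then have Q_const: "Q k = Q 0" for k
    by (induction k) simp_all
  have cross: "\<bar>r * x * y\<bar> \<le> \<bar>r\<bar> / 2 * (x\<^sup>2 + y\<^sup>2)" for x y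
    using sum_squares_bound[of "\<bar>x\<bar>" "\<bar>y\<bar>"] mult_left_mono[of _ _ "\<bar>r\<bar>"]
    by (simp add: abs_mult mult.assoc)
  have "0 < (1 - \<bar>r\<bar> / 2) * ((a 0)\<^sup>2 + (a 1)\<^sup>2)"
    using r nz by (intro mult_pos_pos) (auto simp: add_pos_nonneg add_nonneg_pos)
  also have "\<dots> \<le> Q 0"
    using cross[of "a 0" "a 1"] by (simp add: Q_def algebra_simps abs_le_iff)
  finally have "Q 0 > 0" .
  have "Q 0 / 2 \<le> (a k)\<^sup>2 + (a (Suc k))\<^sup>2" for k
  proof -
    have "Q 0 \<le> (1 + \<bar>r\<bar> / 2) * ((a k)\<^sup>2 + (a (Suc k))\<^sup>2)"
      using cross[of "a k" "a (Suc k)"] Q_const[of k] by (simp add: Q_def algebra_simps abs_le_iff)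
    also have "\<dots> \<le> 2 * ((a k)\<^sup>2 + (a (Suc k))\<^sup>2)"
      using r by (intro mult_right_mono) auto
    finally show ?thesis
      by simp
  qed
  moreover have "(\<lambda>k. (a k)\<^sup>2 + (a (Suc k))\<^sup>2) \<longlonglongrightarrow> 0"
    using tendsto_add[OF summable_LIMSEQ_zero LIMSEQ_Suc[OF summable_LIMSEQ_zero]]
      \<open>summable _\<close> by simp
  ultimately have "Q 0 / 2 \<le> 0"
    by (intro LIMSEQ_le_const) auto
  with \<open>Q 0 > 0\<close> show False
    by simp
qed

lemma free_jacobi_cspectrum:
  fixes h :: "'a::chilbert_space \<Rightarrow> 'a"
  assumes sym: "\<And>x y. cinner (h x) y = cinner x (h y)"
    and e: "orthonormal_seq e"
    and h0: "h (e 0) = e 1" and hS: "\<And>k. h (e (Suc k)) = e (Suc (Suc k)) + e k"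
    and r: "\<bar>r\<bar> < 2"
  shows "complex_of_real r \<in> cspectrum h"
  unfolding cspectrum_def mem_Collect_eq
proof
  assume "\<exists>S. bounded_clinear S \<and> S \<circ> (\<lambda>x. h x - scaleC (of_real r) x) = id \<and>
              (\<lambda>x. h x - scaleC (of_real r) x) \<circ> S = id"
  then obtain y where y: "h y - scaleC (of_real r) y = e 0"
    by (metis comp_apply id_apply)
  define a where "a k = Re (cinner (e k) y)" for k
  have coeff: "cinner (h (e k)) y - of_real r * cinner (e k) y = (if k = 0 then 1 else 0)" for k
  proof -
    have "cinner (e k) (h y - scaleC (of_real r) y) = (if k = 0 then 1 else 0)"
      using e by (simp add: y orthonormal_seq_def)
    then show ?thesis
      by (simp add: sym cinner_diff_right cinner_scaleC_right)
  qed
  have "a 1 - r * a 0 = 1"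
    using arg_cong[OF coeff[of 0], of Re] by (simp add: a_def h0)
  then have "a 0 \<noteq> 0 \<or> a 1 \<noteq> 0"
    by auto
  moreover have "a (Suc (Suc k)) = r * a (Suc k) - a k" for k
    using arg_cong[OF coeff[of "Suc k"], of Re] by (simp add: a_def hS cinner_add_left)
  moreover have "summable (\<lambda>k. (a k)\<^sup>2)"
  proof (rule summableI_nonneg_bounded)
    show "(\<Sum>k<n. (a k)\<^sup>2) \<le> (norm y)\<^sup>2" for n
    proof -
      have "(\<Sum>k<n. (a k)\<^sup>2) \<le> (\<Sum>k<n. (cmod (cinner (e k) y))\<^sup>2)"
        unfolding a_def by (intro sum_mono) (simp add: abs_Re_le_cmod power2_le_iff_abs_le)
      also have "\<dots> \<le> (norm y)\<^sup>2"
        using e by (rule Bessel_inequality)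
      finally show ?thesis .
    qed
  qed simp
  ultimately show False
    using recurrence_not_square_summable r by blast
qed

section \<open>Partial isometries\<close>

lemma orthonormal_seq_orbit:
  fixes v w :: "'a::complex_inner \<Rightarrow> 'a"
  assumes adj: "\<And>x y. cinner (v x) y = cinner x (w y)"
    and "norm \<xi> = 1" "w \<xi> = 0" and iso: "\<And>k. w (v ((v ^^ k) \<xi>)) = (v ^^ k) \<xi>"
  shows "orthonormal_seq (\<lambda>k. (v ^^ k) \<xi>)"
proof -
  have orth_\<xi>: "cinner ((v ^^ Suc j) \<xi>) \<xi> = 0" for j
    by (simp add: adj \<open>w \<xi> = 0\<close>)
  have "cinner ((v ^^ j) \<xi>) ((v ^^ k) \<xi>) = (if j = k then 1 else 0)" for j k
  proof (induction j arbitrary: k)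
    case 0
    show ?case
    proof (cases k)
      case 0
      then show ?thesis
        using \<open>norm \<xi> = 1\<close> by (simp add: cinner_self)
    next
      case (Suc k')
      then show ?thesis
        using orth_\<xi>[of k'] cinner_conj[of \<xi>] by simp
    qed
  next
    case (Suc j)
    show ?case
    proof (cases k)
      case 0
      then show ?thesis
        using orth_\<xi> by simp
    next
      case (Suc k')
      then show ?thesis
        using Suc.IH[of k'] by (simp add: adj iso)
    qed
  qed
  then show ?thesis
    unfolding orthonormal_seq_def by blast
qed

lemma partial_isometry_cadjoint_comp:
  fixes v :: "'a::chilbert_space \<Rightarrow> 'a"
  assumes bv: "bounded_clinear v" and "partial_isometry v"
  shows "v (cadjoint v (v x)) = v x"
proof -
  define d where "d = x - cadjoint v (v x)"
  have "cadjoint v (v (cadjoint v (v x))) = cadjoint v (v x)"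
    using assms(2) unfolding partial_isometry_def is_projection_def by (metis comp_apply)
  then have "cadjoint v (v d) = 0"
    by (simp add: d_def bounded_clinear_diff[OF bv] cadjoint_diff[OF bv])
  then have "cinner (v d) (v d) = 0"
    by (simp add: cinner_cadjoint[OF bv])
  then show ?thesis
    by (simp add: d_def bounded_clinear_diff[OF bv])
qed

lemma proj_le_cadjoint_comp:
  fixes v :: "'a::chilbert_space \<Rightarrow> 'a"
  assumes bv: "bounded_clinear v" and "proj_le (v \<circ> cadjoint v) (cadjoint v \<circ> v)"
  shows "cadjoint v (v (v (cadjoint v x))) = v (cadjoint v x)"
proof (rule cinner_ext)
  fix y
  note adj = cinner_cadjoint[OF bv] cinner_cadjoint_left[OF bv]
  have "cinner y (cadjoint v (v (v (cadjoint v x))))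
      = cinner (v (cadjoint v (cadjoint v (v y)))) x"
    by (simp add: adj)
  also have "\<dots> = cinner (v (cadjoint v y)) x"
    using assms(2) unfolding proj_le_def by (metis comp_apply)
  also have "\<dots> = cinner y (v (cadjoint v x))"
    by (simp add: adj)
  finally show "cinner y (cadjoint v (v (v (cadjoint v x)))) = cinner y (v (cadjoint v x))" .
qed

lemma partial_isometry_wandering_vector:
  fixes v :: "'a::chilbert_space \<Rightarrow> 'a"
  assumes bv: "bounded_clinear v" and "partial_isometry v"
    and "proj_le (v \<circ> cadjoint v) (cadjoint v \<circ> v)"
    and "v \<circ> cadjoint v \<noteq> cadjoint v \<circ> v"
  obtains \<xi> where "norm \<xi> = 1" "cadjoint v \<xi> = 0"
    "\<And>k. cadjoint v (v ((v ^^ k) \<xi>)) = (v ^^ k) \<xi>"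
proof -
  define w where "w = cadjoint v"
  note lin = bounded_clinear_diff[OF bv] bounded_clinear_scaleC[OF bv]
    cadjoint_diff[OF bv, folded w_def] cadjoint_scaleC[OF bv, folded w_def]
  have vwv: "v (w (v x)) = v x" for x
    unfolding w_def using assms(1,2) by (rule partial_isometry_cadjoint_comp)
  have wvvw: "w (v (v (w x))) = v (w x)" for x
    unfolding w_def using assms(1,3) by (rule proj_le_cadjoint_comp)
  have vwwv: "v (w (w (v x))) = v (w x)" for x
    using assms(3) unfolding proj_le_def w_def by (metis comp_apply)
  have wvv: "w (v (v x)) = v x" for x
    using wvvw[of "v x"] by (simp add: vwv)
  obtain x0 where "w (v x0) \<noteq> v (w x0)"
    using assms(4) unfolding w_def by (metis comp_apply ext)
  define \<xi>0 where "\<xi>0 = w (v x0) - v (w x0)"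
  have "\<xi>0 \<noteq> 0"
    using \<open>w (v x0) \<noteq> v (w x0)\<close> by (simp add: \<xi>0_def)
  have "v (w \<xi>0) = 0"
    by (simp add: \<xi>0_def lin vwwv vwv)
  then have "cinner (w \<xi>0) (w \<xi>0) = 0"
    by (simp add: cinner_cadjoint_left[OF bv, folded w_def])
  then have w\<xi>0: "w \<xi>0 = 0"
    by simp
  have wv\<xi>0: "w (v \<xi>0) = \<xi>0"
    by (simp add: \<xi>0_def lin wvvw vwv)
  define \<xi> where "\<xi> = scaleC (of_real (1 / norm \<xi>0)) \<xi>0"
  have "norm \<xi> = 1"
    using \<open>\<xi>0 \<noteq> 0\<close> by (simp add: \<xi>_def norm_scaleC norm_divide)
  moreover have "w \<xi> = 0"
    by (simp add: \<xi>_def lin w\<xi>0)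
  moreover have "w (v ((v ^^ k) \<xi>)) = (v ^^ k) \<xi>" for k
    using wv\<xi>0 by (cases k) (simp_all add: wvv \<xi>_def lin)
  ultimately show ?thesis
    using that unfolding w_def by blast
qed

lemma cinner_add_cadjoint_sym:
  fixes v :: "'a::chilbert_space \<Rightarrow> 'a"
  assumes "bounded_clinear v"
  shows "cinner (v x + cadjoint v x) y = cinner x (v y + cadjoint v y)"
  by (simp add: cinner_add_left cinner_add_right cinner_cadjoint[OF assms]
      cinner_cadjoint_left[OF assms] add.commute)

lemma cspectrum_add_cadjoint_of_partial_isometry:
  fixes v :: "'a::chilbert_space \<Rightarrow> 'a"
  assumes bv: "bounded_clinear v" and "partial_isometry v"
    and "proj_le (v \<circ> cadjoint v) (cadjoint v \<circ> v)"
    and "v \<circ> cadjoint v \<noteq> cadjoint v \<circ> v"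
  shows "complex_of_real ` {-2<..<2} \<subseteq> cspectrum (\<lambda>x. v x + cadjoint v x)"
proof -
  obtain \<xi> where \<xi>: "norm \<xi> = 1" "cadjoint v \<xi> = 0"
    "\<And>k. cadjoint v (v ((v ^^ k) \<xi>)) = (v ^^ k) \<xi>"
    using partial_isometry_wandering_vector[OF assms] by blast
  define e where "e k = (v ^^ k) \<xi>" for k
  have "orthonormal_seq e"
    unfolding e_def using cinner_cadjoint[OF bv] \<xi> by (rule orthonormal_seq_orbit)
  have "complex_of_real r \<in> cspectrum (\<lambda>x. v x + cadjoint v x)" if "\<bar>r\<bar> < 2" for r
  proof (rule free_jacobi_cspectrum[OF cinner_add_cadjoint_sym[OF bv] \<open>orthonormal_seq e\<close>])
    show "v (e 0) + cadjoint v (e 0) = e 1"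
      using \<xi>(2) by (simp add: e_def)
    show "v (e (Suc k)) + cadjoint v (e (Suc k)) = e (Suc (Suc k)) + e k" for k
      using \<xi>(3) by (simp add: e_def)
  qed fact
  then show ?thesis
    by auto
qed

theorem proposition6p1:
  fixes A :: "('a::chilbert_space \<Rightarrow> 'a) set" and v :: "'a \<Rightarrow> 'a"
  assumes "rstar_algebra A"
    and "v \<in> A"
    and "partial_isometry v"
    and "proj_le (v \<circ> cadjoint v) (cadjoint v \<circ> v)"
  shows "v \<circ> cadjoint v = cadjoint v \<circ> v"
proof (rule ccontr)
  assume "v \<circ> cadjoint v \<noteq> cadjoint v \<circ> v"
  have bv: "bounded_clinear v"
    using assms(1,2) by (simp add: rstar_algebra_def)
  define h where "h = (\<lambda>x. v x + cadjoint v x)"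
  have "h \<in> A"
    using assms(1,2) unfolding rstar_algebra_def h_def by blast
  moreover have "cadjoint h = h"
    unfolding h_def by (rule cadjoint_eqI) (rule cinner_add_cadjoint_sym[OF bv])
  ultimately have "finite (cspectrum h)"
    using assms(1) unfolding rstar_algebra_def by blast
  moreover have "complex_of_real ` {-2<..<2} \<subseteq> cspectrum h"
    unfolding h_def using cspectrum_add_cadjoint_of_partial_isometry[OF bv assms(3,4)] \<open>v \<circ> _ \<noteq> _\<close> .
  moreover have "infinite (complex_of_real ` {-2<..<2::real})"
    by (simp add: finite_image_iff inj_on_def infinite_Ioo)
  ultimately show False
    using finite_subset by blast
qed

end
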